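(* Let $A\in\mathsf{M}_n(\mathbb{C})$ be $h$-cyclic with consecutive partition $P=\{V_1,\dots,V_h\}$, so that $A$ has the block form in which the only possibly nonzero blocks are $A_{12},A_{23},\dots,A_{h-1,h},A_{h1}$. Then $A$ is singular if and only if at least one of the matrices $B_1,\dots,B_h$ is singular.
   Context: $P=\{V_1,\dots,V_h\}$ is a consecutive partition of $\{1,\dots,n\}$ into nonempty sets: $V_1=\{1,\dots,i_1\}$, $V_2=\{i_1+1,\dots,i_2\}$, \dots, $V_h=\{i_{h-1}+1,\dots,n\}$. $A_{ij}$ denotes the submatrix $A(V_i,V_j)$ with rows indexed by $V_i$ and columns by $V_j$. $A$ being $h$-cyclic with partition $P$ means $A_{ij}=0$ unless $j\equiv i+1\pmod h$. Let $\alpha$ be the permutation of $\{1,\dots,h\}$ given by $\alpha(i)=(i\bmod h)+1$. For $i\in\{1,\dots,h\}$ and $p\in\mathbb{N}$, $B_{ip}:=\prod_{j=h+1-p}^{h}A_{\alpha^{j-1}(i),\alpha^{j}(i)}$ (product taken in increasing order of $j$), and $B_i:=B_{ih}=A_{i,\alpha(i)}A_{\alpha(i),\alpha^2(i)}\cdots A_{\alpha^{h-1}(i),i}$, a square matrix of order $|V_i|$. *)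

theory Defs
  imports "Jordan_Normal_Form.Determinant"
begin

text \<open>A consecutive partition of the index set (0-based: rows/cols 0..n-1) into h blocks is
  given by breakpoints i 0 = 0 < i 1 < ... < i h = n; block V_k (k = 1..h) is {i(k-1) ..< i k}.\<close>

definition consec_partition :: "nat \<Rightarrow> nat \<Rightarrow> (nat \<Rightarrow> nat) \<Rightarrow> bool" where
  "consec_partition n h brk \<longleftrightarrow> brk 0 = 0 \<and> brk h = n \<and> strict_mono_on {0..h} brk"

definition blk_size :: "(nat \<Rightarrow> nat) \<Rightarrow> nat \<Rightarrow> nat" where
  "blk_size brk k = brk k - brk (k - 1)"

definition blk :: "'a mat \<Rightarrow> (nat \<Rightarrow> nat) \<Rightarrow> nat \<Rightarrow> nat \<Rightarrow> 'a mat" where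
  "blk A brk j k = mat (blk_size brk j) (blk_size brk k)
     (\<lambda>(r, c). A $$ (brk (j - 1) + r, brk (k - 1) + c))"

definition h_cyclic :: "'a::zero mat \<Rightarrow> nat \<Rightarrow> (nat \<Rightarrow> nat) \<Rightarrow> bool" where
  "h_cyclic A h brk \<longleftrightarrow> (\<forall>j\<in>{1..h}. \<forall>k\<in>{1..h}.
     k mod h \<noteq> (j + 1) mod h \<longrightarrow> blk A brk j k = 0\<^sub>m (blk_size brk j) (blk_size brk k))"

definition cyc_alpha :: "nat \<Rightarrow> nat \<Rightarrow> nat" where
  "cyc_alpha h i = (i mod h) + 1"

text \<open>B_{ip} = A_{\<alpha>^{h-p}(i),\<alpha>^{h-p+1}(i)} \<cdots> A_{\<alpha>^{h-1}(i),\<alpha>^h(i)}; we only need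
  B_i = B_{ih} = A_{i,\<alpha>(i)} A_{\<alpha>(i),\<alpha>^2(i)} \<cdots> A_{\<alpha>^{h-1}(i),i}, the product of the
  first m factors being cyc_prod A h brk i m.\<close>
fun cyc_prod :: "'a::comm_ring_1 mat \<Rightarrow> nat \<Rightarrow> (nat \<Rightarrow> nat) \<Rightarrow> nat \<Rightarrow> nat \<Rightarrow> 'a mat" where
  "cyc_prod A h brk i 0 = 1\<^sub>m (blk_size brk i)"
| "cyc_prod A h brk i (Suc m) = cyc_prod A h brk i m *
     blk A brk ((cyc_alpha h ^^ m) i) ((cyc_alpha h ^^ Suc m) i)"

definition B_mat :: "'a::comm_ring_1 mat \<Rightarrow> nat \<Rightarrow> (nat \<Rightarrow> nat) \<Rightarrow> nat \<Rightarrow> 'a mat" where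
  "B_mat A h brk i = cyc_prod A h brk i h"

end

theory Submission
  imports Defs
begin

(* The equation A x = 0 decouples along the partition: the V_j-part of A x is A_{j,\<alpha>(j)}
   applied to the V_{\<alpha>(j)}-part of x, and \<alpha> permutes the blocks. Hence A is singular iff some
   (rectangular) block A_{j,\<alpha>(j)} annihilates a nonzero vector. Such a block is the last
   factor of the cyclic product B_{\<alpha>(j)}, which is then singular; conversely, a nonzero
   vector annihilated by a product yields one annihilated by one of its factors. *)

definition nontrivial_kernel :: "'a::semiring_0 mat \<Rightarrow> bool" where
  "nontrivial_kernel M \<longleftrightarrow>
     (\<exists>v \<in> carrier_vec (dim_col M). v \<noteq> 0\<^sub>v (dim_col M) \<and> M *\<^sub>v v = 0\<^sub>v (dim_row M))"

lemma det_eq_0_iff_nontrivial_kernel: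
  fixes M :: "'a::idom mat"
  assumes "M \<in> carrier_mat n n"
  shows "det M = 0 \<longleftrightarrow> nontrivial_kernel M"
  using assms unfolding nontrivial_kernel_def det_0_iff_vec_prod_zero[OF assms] by auto

lemma not_nontrivial_kernel_one: "\<not> nontrivial_kernel (1\<^sub>m n :: 'a::semiring_1 mat)"
  unfolding nontrivial_kernel_def by auto

lemma mult_mat_vec_zero: "M \<in> carrier_mat m n \<Longrightarrow> M *\<^sub>v 0\<^sub>v n = 0\<^sub>v m"
  by (intro eq_vecI) (auto simp: scalar_prod_def)

lemma nontrivial_kernel_mult_right:
  assumes "nontrivial_kernel B" "dim_col M = dim_row B"
  shows "nontrivial_kernel (M * B)"
proof -
  obtain v where v: "v \<in> carrier_vec (dim_col B)" "v \<noteq> 0\<^sub>v (dim_col B)"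
    "B *\<^sub>v v = 0\<^sub>v (dim_row B)"
    using assms(1) unfolding nontrivial_kernel_def by blast
  have M: "M \<in> carrier_mat (dim_row M) (dim_row B)" using assms(2) by (intro carrier_matI) simp_all
  have "M * B *\<^sub>v v = M *\<^sub>v (B *\<^sub>v v)"
    by (rule assoc_mult_mat_vec[OF M carrier_mat_triv v(1)])
  also have "\<dots> = 0\<^sub>v (dim_row M)"
    unfolding v(3) by (rule mult_mat_vec_zero[OF M])
  finally show ?thesis using v(1,2) unfolding nontrivial_kernel_def by auto
qed

lemma nontrivial_kernel_mult_cases:
  assumes "nontrivial_kernel (M * B)" "dim_col M = dim_row B"
  shows "nontrivial_kernel M \<or> nontrivial_kernel B"
proof (rule disjCI)
  assume "\<not> nontrivial_kernel B"
  obtain v where v: "v \<in> carrier_vec (dim_col B)" "v \<noteq> 0\<^sub>v (dim_col B)"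
    "M * B *\<^sub>v v = 0\<^sub>v (dim_row M)"
    using assms(1) unfolding nontrivial_kernel_def by auto
  have M: "M \<in> carrier_mat (dim_row M) (dim_row B)" using assms(2) by (intro carrier_matI) simp_all
  have Bv: "B *\<^sub>v v \<in> carrier_vec (dim_col M)"
    using mult_mat_vec_carrier[OF carrier_mat_triv v(1)] assms(2) by simp
  have "B *\<^sub>v v \<noteq> 0\<^sub>v (dim_col M)"
    using \<open>\<not> nontrivial_kernel B\<close> v(1,2) assms(2) unfolding nontrivial_kernel_def by auto
  moreover have "M *\<^sub>v (B *\<^sub>v v) = 0\<^sub>v (dim_row M)"
    using assoc_mult_mat_vec[OF M carrier_mat_triv v(1)] v(3) by simp
  ultimately show "nontrivial_kernel M" using Bv unfolding nontrivial_kernel_def by blast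
qed

lemma consec_partition_mono:
  assumes "consec_partition n h brk" "a \<le> b" "b \<le> h"
  shows "brk a \<le> brk b"
  using assms strict_mono_on_leD[of "{0..h}" brk a b] unfolding consec_partition_def by auto

lemma consec_partition_blk_size:
  assumes "consec_partition n h brk" "k \<in> {1..h}"
  shows "brk k = brk (k - 1) + blk_size brk k"
  using consec_partition_mono[OF assms(1), of "k - 1" k] assms(2) unfolding blk_size_def by auto

lemma consec_partition_le:
  assumes "consec_partition n h brk" "k \<le> h"
  shows "brk k \<le> n"
  using consec_partition_mono[OF assms(1) assms(2) order.refl] assms(1)
  unfolding consec_partition_def by auto

lemma consec_partition_blockE:
  assumes "consec_partition n h brk" "p < n"
  obtains k where "k \<in> {1..h}" "brk (k - 1) \<le> p" "p < brk k"
proof -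
  define k where "k = (LEAST k. p < brk k)"
  have "p < brk h" using assms unfolding consec_partition_def by simp
  then have "p < brk k" "k \<le> h" unfolding k_def by (fact LeastI, fact Least_le)
  moreover have "k \<noteq> 0" using \<open>p < brk k\<close> assms(1) unfolding consec_partition_def
    by (metis not_less_zero)
  moreover have "\<not> p < brk (k - 1)"
    unfolding k_def by (rule not_less_Least) (use \<open>k \<noteq> 0\<close> k_def in simp)
  ultimately show ?thesis by (intro that) auto
qed

lemma consec_partition_blocks_disjoint:
  assumes "consec_partition n h brk" "k \<in> {1..h}" "k' \<in> {1..h}" "k' \<noteq> k"
    "brk (k' - 1) \<le> p" "p < brk k'"
  shows "\<not> (brk (k - 1) \<le> p \<and> p < brk k)"
proof -
  consider "k' < k" | "k < k'" using assms(4) by linarith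
  then show ?thesis
  proof cases
    case 1
    then have "brk k' \<le> brk (k - 1)" using assms(2) by (intro consec_partition_mono[OF assms(1)]) auto
    then show ?thesis using assms(6) by linarith
  next
    case 2
    then have "brk k \<le> brk (k' - 1)" using assms(3) by (intro consec_partition_mono[OF assms(1)]) auto
    then show ?thesis using assms(5) by linarith
  qed
qed

lemma cyc_alpha_in_range: "h \<ge> 1 \<Longrightarrow> cyc_alpha h i \<in> {1..h}"
  unfolding cyc_alpha_def by (auto simp: Suc_le_eq)

lemma funpow_cyc_alpha:
  assumes "h \<ge> 1" "i \<in> {1..h}"
  shows "(cyc_alpha h ^^ m) i = (i - 1 + m) mod h + 1"
proof (induction m)
  case 0
  have "i - 1 < h" using assms(2) by auto
  then show ?case using assms(2) by simp
next
  case (Suc m)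
  then show ?case by (simp add: cyc_alpha_def mod_Suc_eq)
qed

lemma funpow_cyc_alpha_in_range:
  "h \<ge> 1 \<Longrightarrow> i \<in> {1..h} \<Longrightarrow> (cyc_alpha h ^^ m) i \<in> {1..h}"
  using funpow_cyc_alpha[of h i m] by (auto simp: Suc_le_eq)

lemma funpow_cyc_alpha_period:
  assumes "h \<ge> 1" "i \<in> {1..h}"
  shows "(cyc_alpha h ^^ h) i = i"
proof -
  have "i - 1 < h" using assms(2) by auto
  then have "(i - 1 + h) mod h + 1 = i" using assms(2) by (simp only: mod_add_self2 mod_less) simp
  then show ?thesis unfolding funpow_cyc_alpha[OF assms] .
qed

lemma funpow_cyc_alpha_pred:
  assumes "h \<ge> 1" "i \<in> {1..h}"
  shows "(cyc_alpha h ^^ (h - 1)) (cyc_alpha h i) = i"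
    and "cyc_alpha h ((cyc_alpha h ^^ (h - 1)) i) = i"
proof -
  have "Suc (h - 1) = h" using assms(1) by simp
  then show "(cyc_alpha h ^^ (h - 1)) (cyc_alpha h i) = i"
    and "cyc_alpha h ((cyc_alpha h ^^ (h - 1)) i) = i"
    using funpow_cyc_alpha_period[OF assms] funpow_Suc_right[where f = "cyc_alpha h" and n = "h - 1"]
      funpow.simps(2)[where f = "cyc_alpha h" and n = "h - 1"] by (metis comp_apply)+
qed

lemma cyc_alpha_inj_on: "inj_on (cyc_alpha h) {1..h}"
  by (rule inj_on_inverseI[where g = "cyc_alpha h ^^ (h - 1)"])
    (metis atLeastAtMost_iff funpow_cyc_alpha_pred(1) order_trans)

lemma mod_eq_imp_eq_in_range:
  fixes a b h :: nat
  assumes "a \<in> {1..h}" "b \<in> {1..h}" "a mod h = b mod h"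
  shows "a = b"
  using assms by (cases "a = h"; cases "b = h") auto

lemma h_cyclic_blk_eq_zero:
  assumes "h \<ge> 1" "h_cyclic A h brk" "j \<in> {1..h}" "k \<in> {1..h}" "k \<noteq> cyc_alpha h j"
  shows "blk A brk j k = 0\<^sub>m (blk_size brk j) (blk_size brk k)"
proof -
  have "cyc_alpha h j mod h = (j + 1) mod h"
    unfolding cyc_alpha_def by (simp add: mod_Suc_eq)
  then have "k mod h \<noteq> (j + 1) mod h"
    using mod_eq_imp_eq_in_range[OF assms(4) cyc_alpha_in_range[OF assms(1)]] assms(5) by metis
  then show ?thesis using assms(2-4) unfolding h_cyclic_def by blast
qed

lemma blk_carrier: "blk A brk j k \<in> carrier_mat (blk_size brk j) (blk_size brk k)"
  unfolding blk_def by simp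

lemma dim_blk [simp]:
  "dim_row (blk A brk j k) = blk_size brk j" "dim_col (blk A brk j k) = blk_size brk k"
  unfolding blk_def by simp_all

lemma h_cyclic_entry_eq_zero:
  assumes "h \<ge> 1" "consec_partition n h brk" "h_cyclic A h brk"
    and "j \<in> {1..h}" "brk (j - 1) \<le> p" "p < brk j"
    and "k \<in> {1..h}" "brk (k - 1) \<le> q" "q < brk k" "k \<noteq> cyc_alpha h j"
  shows "A $$ (p, q) = 0"
proof -
  have r: "p - brk (j - 1) < blk_size brk j" and c: "q - brk (k - 1) < blk_size brk k"
    using consec_partition_blk_size[OF assms(2,4)] consec_partition_blk_size[OF assms(2,7)]
      assms(5,6,8,9) by linarith+
  have "A $$ (p, q) = blk A brk j k $$ (p - brk (j - 1), q - brk (k - 1))"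
    using r c assms(5,8) unfolding blk_def by simp
  also have "\<dots> = 0"
    using h_cyclic_blk_eq_zero[OF assms(1,3,4,7,10)] r c by simp
  finally show ?thesis .
qed

definition blk_vec :: "'a vec \<Rightarrow> (nat \<Rightarrow> nat) \<Rightarrow> nat \<Rightarrow> 'a vec" where
  "blk_vec x brk k = vec (blk_size brk k) (\<lambda>c. x $ (brk (k - 1) + c))"

lemma dim_blk_vec [simp]: "dim_vec (blk_vec x brk k) = blk_size brk k"
  unfolding blk_vec_def by simp

lemma vec_eq_zero_iff_blk_vec:
  assumes "consec_partition n h brk" "x \<in> carrier_vec n"
  shows "x = 0\<^sub>v n \<longleftrightarrow> (\<forall>k \<in> {1..h}. blk_vec x brk k = 0\<^sub>v (blk_size brk k))"
proof
  assume "x = 0\<^sub>v n"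
  show "\<forall>k \<in> {1..h}. blk_vec x brk k = 0\<^sub>v (blk_size brk k)"
  proof (intro ballI eq_vecI)
    fix k c assume k: "k \<in> {1..h}" and "c < dim_vec (0\<^sub>v (blk_size brk k))"
    then have "c < blk_size brk k" by simp
    moreover have "brk (k - 1) + c < n"
      using calculation consec_partition_blk_size[OF assms(1) k] consec_partition_le[OF assms(1), of k] k
      by simp
    ultimately show "blk_vec x brk k $ c = 0\<^sub>v (blk_size brk k) $ c"
      using \<open>x = 0\<^sub>v n\<close> unfolding blk_vec_def by simp
  qed simp
next
  assume blocks: "\<forall>k \<in> {1..h}. blk_vec x brk k = 0\<^sub>v (blk_size brk k)"
  show "x = 0\<^sub>v n"
  proof (rule eq_vecI)
    fix p assume "p < dim_vec (0\<^sub>v n)"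
    then obtain k where k: "k \<in> {1..h}" "brk (k - 1) \<le> p" "p < brk k"
      using consec_partition_blockE[OF assms(1)] by auto
    then have "p - brk (k - 1) < blk_size brk k"
      using consec_partition_blk_size[OF assms(1) k(1)] by linarith
    then have "x $ p = blk_vec x brk k $ (p - brk (k - 1))"
      using k(2) unfolding blk_vec_def by simp
    then show "x $ p = 0\<^sub>v n $ p" using blocks k \<open>p < dim_vec (0\<^sub>v n)\<close>
      \<open>p - brk (k - 1) < blk_size brk k\<close> by simp
  qed (use assms(2) in simp)
qed

lemma blk_vec_mult_mat_vec_h_cyclic:
  assumes "A \<in> carrier_mat n n" "h \<ge> 1" "consec_partition n h brk" "h_cyclic A h brk"
    and "x \<in> carrier_vec n" "j \<in> {1..h}"
  shows "blk_vec (A *\<^sub>v x) brk j = blk A brk j (cyc_alpha h j) *\<^sub>v blk_vec x brk (cyc_alpha h j)"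
proof (rule eq_vecI)
  fix r assume "r < dim_vec (blk A brk j (cyc_alpha h j) *\<^sub>v blk_vec x brk (cyc_alpha h j))"
  then have r: "r < blk_size brk j" by simp
  define k where "k = cyc_alpha h j"
  define p where "p = brk (j - 1) + r"
  have k: "k \<in> {1..h}" unfolding k_def using cyc_alpha_in_range[OF assms(2)] .
  have bk: "brk k = brk (k - 1) + blk_size brk k" "brk k \<le> n"
    using consec_partition_blk_size[OF assms(3) k] consec_partition_le[OF assms(3), of k] k by auto
  have "p < brk j" "brk j \<le> n"
    using consec_partition_blk_size[OF assms(3,6)] consec_partition_le[OF assms(3), of j] assms(6) r
    unfolding p_def by auto
  have outside: "A $$ (p, q) * x $ q = 0" if "q < n" "q \<notin> {brk (k - 1)..<brk k}" for q
  proof -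
    obtain k' where k': "k' \<in> {1..h}" "brk (k' - 1) \<le> q" "q < brk k'"
      using consec_partition_blockE[OF assms(3) \<open>q < n\<close>] .
    have "k' \<noteq> k" using k' that(2) by auto
    then have "A $$ (p, q) = 0"
      using h_cyclic_entry_eq_zero[OF assms(2-4,6) _ \<open>p < brk j\<close> k'] unfolding p_def k_def by simp
    then show ?thesis by simp
  qed
  have "blk_vec (A *\<^sub>v x) brk j $ r = (\<Sum>q \<in> {0..<n}. A $$ (p, q) * x $ q)"
    using r assms(1,5) \<open>p < brk j\<close> \<open>brk j \<le> n\<close>
    unfolding blk_vec_def p_def by (simp add: scalar_prod_def)
  also have "\<dots> = (\<Sum>q \<in> {0 + brk (k - 1)..<blk_size brk k + brk (k - 1)}. A $$ (p, q) * x $ q)"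
    using outside bk by (intro sum.mono_neutral_right) (auto simp: add.commute)
  also have "\<dots> = (\<Sum>c \<in> {0..<blk_size brk k}. A $$ (p, c + brk (k - 1)) * x $ (c + brk (k - 1)))"
    by (rule sum.shift_bounds_nat_ivl)
  also have "\<dots> = (blk A brk j k *\<^sub>v blk_vec x brk k) $ r"
    using r unfolding blk_def blk_vec_def p_def by (simp add: scalar_prod_def add.commute)
  finally show "blk_vec (A *\<^sub>v x) brk j $ r
      = (blk A brk j (cyc_alpha h j) *\<^sub>v blk_vec x brk (cyc_alpha h j)) $ r"
    unfolding k_def .
qed simp

definition blk_extend :: "nat \<Rightarrow> (nat \<Rightarrow> nat) \<Rightarrow> nat \<Rightarrow> 'a::zero vec \<Rightarrow> 'a vec" where
  "blk_extend n brk k z =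
     vec n (\<lambda>q. if brk (k - 1) \<le> q \<and> q < brk k then z $ (q - brk (k - 1)) else 0)"

lemma blk_vec_blk_extend:
  assumes "consec_partition n h brk" "k \<in> {1..h}" "k' \<in> {1..h}"
    and "z \<in> carrier_vec (blk_size brk k)"
  shows "blk_vec (blk_extend n brk k z) brk k' = (if k' = k then z else 0\<^sub>v (blk_size brk k'))"
proof (rule eq_vecI)
  fix c assume "c < dim_vec (if k' = k then z else 0\<^sub>v (blk_size brk k'))"
  then have c: "c < blk_size brk k'" using assms(4) by (auto split: if_splits)
  have in_range: "brk (k' - 1) + c < n"
    using c consec_partition_blk_size[OF assms(1,3)] consec_partition_le[OF assms(1), of k'] assms(3)
    by auto
  have "blk_vec (blk_extend n brk k z) brk k' $ c
      = (if brk (k - 1) \<le> brk (k' - 1) + c \<and> brk (k' - 1) + c < brk k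
         then z $ (brk (k' - 1) + c - brk (k - 1)) else 0)"
    using c in_range unfolding blk_vec_def blk_extend_def by simp
  also have "\<dots> = (if k' = k then z else 0\<^sub>v (blk_size brk k')) $ c"
  proof (cases "k' = k")
    case True
    then show ?thesis using c consec_partition_blk_size[OF assms(1,3)] by simp
  next
    case False
    have "brk (k' - 1) + c < brk k'" using c consec_partition_blk_size[OF assms(1,3)] by simp
    then have "\<not> (brk (k - 1) \<le> brk (k' - 1) + c \<and> brk (k' - 1) + c < brk k)"
      by (rule consec_partition_blocks_disjoint[OF assms(1,2,3) False le_add1[of "brk (k' - 1)" c]])
    then show ?thesis using False c by (simp only: if_not_P if_False index_zero_vec(1))
  qed
  finally show "blk_vec (blk_extend n brk k z) brk k' $ c
      = (if k' = k then z else 0\<^sub>v (blk_size brk k')) $ c" .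
qed (use assms(4) in auto)

lemma mult_mat_vec_blk_extend_h_cyclic:
  assumes "A \<in> carrier_mat n n" "h \<ge> 1" "consec_partition n h brk" "h_cyclic A h brk"
    and "j \<in> {1..h}" "z \<in> carrier_vec (blk_size brk (cyc_alpha h j))"
    and "blk A brk j (cyc_alpha h j) *\<^sub>v z = 0\<^sub>v (blk_size brk j)"
  shows "A *\<^sub>v blk_extend n brk (cyc_alpha h j) z = 0\<^sub>v n"
proof -
  let ?x = "blk_extend n brk (cyc_alpha h j) z"
  have x: "?x \<in> carrier_vec n" unfolding blk_extend_def by simp
  have x_blocks: "blk_vec ?x brk (cyc_alpha h j')
      = (if j' = j then z else 0\<^sub>v (blk_size brk (cyc_alpha h j')))" if "j' \<in> {1..h}" for j'
    using blk_vec_blk_extend[OF assms(3) cyc_alpha_in_range[OF assms(2)]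
        cyc_alpha_in_range[OF assms(2)] assms(6)]
      inj_onD[OF cyc_alpha_inj_on, of h j' j] that assms(5) by auto
  have "\<forall>j' \<in> {1..h}. blk_vec (A *\<^sub>v ?x) brk j' = 0\<^sub>v (blk_size brk j')"
  proof
    fix j' assume j': "j' \<in> {1..h}"
    show "blk_vec (A *\<^sub>v ?x) brk j' = 0\<^sub>v (blk_size brk j')"
      using blk_vec_mult_mat_vec_h_cyclic[OF assms(1-4) x j'] x_blocks[OF j'] assms(7)
      by (simp add: mult_mat_vec_zero[OF blk_carrier])
  qed
  then show ?thesis
    by (rule iffD2[OF vec_eq_zero_iff_blk_vec[OF assms(3) mult_mat_vec_carrier[OF assms(1) x]]])
qed

lemma nontrivial_kernel_h_cyclic_iff:
  fixes A :: "'a::semiring_0 mat"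
  assumes "A \<in> carrier_mat n n" "h \<ge> 1" "consec_partition n h brk" "h_cyclic A h brk"
  shows "nontrivial_kernel A \<longleftrightarrow> (\<exists>j \<in> {1..h}. nontrivial_kernel (blk A brk j (cyc_alpha h j)))"
proof
  assume "nontrivial_kernel A"
  then obtain x where x: "x \<in> carrier_vec n" "x \<noteq> 0\<^sub>v n" "A *\<^sub>v x = 0\<^sub>v n"
    using assms(1) unfolding nontrivial_kernel_def by auto
  then have "\<not> (\<forall>k \<in> {1..h}. blk_vec x brk k = 0\<^sub>v (blk_size brk k))"
    using vec_eq_zero_iff_blk_vec[OF assms(3) x(1)] by simp
  then obtain k where k: "k \<in> {1..h}" "blk_vec x brk k \<noteq> 0\<^sub>v (blk_size brk k)"
    by blast
  define j where "j = (cyc_alpha h ^^ (h - 1)) k"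
  have j: "j \<in> {1..h}" "cyc_alpha h j = k"
    unfolding j_def using funpow_cyc_alpha_in_range[OF assms(2) k(1)]
      funpow_cyc_alpha_pred(2)[OF assms(2) k(1)] by simp_all
  have "blk A brk j k *\<^sub>v blk_vec x brk k = blk_vec (A *\<^sub>v x) brk j"
    unfolding blk_vec_mult_mat_vec_h_cyclic[OF assms x(1) j(1)] j(2) ..
  also have "\<dots> = 0\<^sub>v (blk_size brk j)"
    using iffD1[OF vec_eq_zero_iff_blk_vec[OF assms(3) mult_mat_vec_carrier[OF assms(1) x(1)]] x(3)] j(1)
    by blast
  finally have "blk A brk j k *\<^sub>v blk_vec x brk k = 0\<^sub>v (blk_size brk j)" .
  moreover have "blk_vec x brk k \<in> carrier_vec (blk_size brk k)" by (intro carrier_vecI) simp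
  ultimately have "nontrivial_kernel (blk A brk j (cyc_alpha h j))"
    using j(2) k(2) unfolding nontrivial_kernel_def by auto
  then show "\<exists>j \<in> {1..h}. nontrivial_kernel (blk A brk j (cyc_alpha h j))"
    using j(1) by blast
next
  assume "\<exists>j \<in> {1..h}. nontrivial_kernel (blk A brk j (cyc_alpha h j))"
  then obtain j z where j: "j \<in> {1..h}" and z: "z \<in> carrier_vec (blk_size brk (cyc_alpha h j))"
    "z \<noteq> 0\<^sub>v (blk_size brk (cyc_alpha h j))"
    "blk A brk j (cyc_alpha h j) *\<^sub>v z = 0\<^sub>v (blk_size brk j)"
    unfolding nontrivial_kernel_def by auto
  let ?x = "blk_extend n brk (cyc_alpha h j) z"
  have x: "?x \<in> carrier_vec n" unfolding blk_extend_def by simp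
  moreover have "?x \<noteq> 0\<^sub>v n"
  proof
    assume "?x = 0\<^sub>v n"
    then have "blk_vec ?x brk (cyc_alpha h j) = 0\<^sub>v (blk_size brk (cyc_alpha h j))"
      using iffD1[OF vec_eq_zero_iff_blk_vec[OF assms(3) x]] cyc_alpha_in_range[OF assms(2)] by blast
    then show False
      using blk_vec_blk_extend[OF assms(3) cyc_alpha_in_range[OF assms(2)] cyc_alpha_in_range[OF assms(2)] z(1)]
        z(2) by simp
  qed
  moreover have "A *\<^sub>v ?x = 0\<^sub>v n"
    by (rule mult_mat_vec_blk_extend_h_cyclic[OF assms j z(1,3)])
  ultimately show "nontrivial_kernel A" using assms(1) unfolding nontrivial_kernel_def by auto
qed

lemma cyc_prod_carrier:
  "cyc_prod A h brk i m \<in> carrier_mat (blk_size brk i) (blk_size brk ((cyc_alpha h ^^ m) i))"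
proof (induction m)
  case (Suc m)
  then show ?case
    using blk_carrier[of A brk "(cyc_alpha h ^^ m) i" "(cyc_alpha h ^^ Suc m) i"]
    by (simp del: funpow.simps)
qed simp

lemma nontrivial_kernel_cyc_prod:
  assumes "nontrivial_kernel (cyc_prod A h brk i m)"
  shows "\<exists>l < m. nontrivial_kernel (blk A brk ((cyc_alpha h ^^ l) i) ((cyc_alpha h ^^ Suc l) i))"
  using assms
proof (induction m)
  case 0
  have "\<not> nontrivial_kernel (cyc_prod A h brk i 0)"
    unfolding cyc_prod.simps by (rule not_nontrivial_kernel_one)
  then show ?case using 0 by contradiction
next
  case (Suc m)
  have "dim_col (cyc_prod A h brk i m) = dim_row (blk A brk ((cyc_alpha h ^^ m) i) ((cyc_alpha h ^^ Suc m) i))"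
    using cyc_prod_carrier[of A h brk i m] by (simp del: funpow.simps)
  then have "nontrivial_kernel (cyc_prod A h brk i m)
      \<or> nontrivial_kernel (blk A brk ((cyc_alpha h ^^ m) i) ((cyc_alpha h ^^ Suc m) i))"
    using Suc.prems by (intro nontrivial_kernel_mult_cases) (simp_all del: funpow.simps)
  then show ?case using Suc.IH less_Suc_eq by blast
qed

lemma B_mat_carrier:
  assumes "h \<ge> 1" "i \<in> {1..h}"
  shows "B_mat A h brk i \<in> carrier_mat (blk_size brk i) (blk_size brk i)"
  using cyc_prod_carrier[of A h brk i h] funpow_cyc_alpha_period[OF assms] unfolding B_mat_def by simp

lemma B_mat_cyc_alpha:
  assumes "h \<ge> 1" "j \<in> {1..h}"
  shows "B_mat A h brk (cyc_alpha h j)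
    = cyc_prod A h brk (cyc_alpha h j) (h - 1) * blk A brk j (cyc_alpha h j)"
proof -
  obtain m where m: "h = Suc m" using assms(1) by (cases h) auto
  have "(cyc_alpha h ^^ m) (cyc_alpha h j) = j"
    using funpow_cyc_alpha_pred(1)[OF assms] m by simp
  then show ?thesis unfolding B_mat_def m by simp
qed

lemma nontrivial_kernel_B_mat_iff:
  assumes "h \<ge> 1"
  shows "(\<exists>i \<in> {1..h}. nontrivial_kernel (B_mat A h brk i))
    \<longleftrightarrow> (\<exists>j \<in> {1..h}. nontrivial_kernel (blk A brk j (cyc_alpha h j)))"
proof
  assume "\<exists>i \<in> {1..h}. nontrivial_kernel (B_mat A h brk i)"
  then obtain i l where i: "i \<in> {1..h}"
    and l: "nontrivial_kernel (blk A brk ((cyc_alpha h ^^ l) i) ((cyc_alpha h ^^ Suc l) i))"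
    unfolding B_mat_def using nontrivial_kernel_cyc_prod by blast
  then show "\<exists>j \<in> {1..h}. nontrivial_kernel (blk A brk j (cyc_alpha h j))"
    using funpow_cyc_alpha_in_range[OF assms i] by auto
next
  assume "\<exists>j \<in> {1..h}. nontrivial_kernel (blk A brk j (cyc_alpha h j))"
  then obtain j where j: "j \<in> {1..h}" and ker: "nontrivial_kernel (blk A brk j (cyc_alpha h j))" ..
  have "dim_col (cyc_prod A h brk (cyc_alpha h j) (h - 1)) = blk_size brk j"
    using cyc_prod_carrier[of A h brk "cyc_alpha h j" "h - 1"] funpow_cyc_alpha_pred(1)[OF assms j]
    by simp
  then have "nontrivial_kernel (B_mat A h brk (cyc_alpha h j))"
    unfolding B_mat_cyc_alpha[OF assms j] by (intro nontrivial_kernel_mult_right[OF ker]) simp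
  then show "\<exists>i \<in> {1..h}. nontrivial_kernel (B_mat A h brk i)"
    using cyc_alpha_in_range[OF assms] by blast
qed

theorem lemma5p1:
  fixes A :: "complex mat" and n h :: nat and brk :: "nat \<Rightarrow> nat"
  assumes "A \<in> carrier_mat n n"
    and "h \<ge> 1"
    and "consec_partition n h brk"
    and "h_cyclic A h brk"
  shows "det A = 0 \<longleftrightarrow> (\<exists>i\<in>{1..h}. det (B_mat A h brk i) = 0)"
proof -
  have "det A = 0 \<longleftrightarrow> nontrivial_kernel A"
    by (rule det_eq_0_iff_nontrivial_kernel[OF assms(1)])
  also have "\<dots> \<longleftrightarrow> (\<exists>j \<in> {1..h}. nontrivial_kernel (blk A brk j (cyc_alpha h j)))"
    by (rule nontrivial_kernel_h_cyclic_iff[OF assms])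
  also have "\<dots> \<longleftrightarrow> (\<exists>i \<in> {1..h}. nontrivial_kernel (B_mat A h brk i))"
    by (rule nontrivial_kernel_B_mat_iff[OF assms(2), symmetric])
  also have "\<dots> \<longleftrightarrow> (\<exists>i \<in> {1..h}. det (B_mat A h brk i) = 0)"
    using det_eq_0_iff_nontrivial_kernel[OF B_mat_carrier[OF assms(2)]] by blast
  finally show ?thesis .
qed

end
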